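(* Let $G=(V,E)$ be an infinite, connected, locally finite, vertex-transitive graph, $o\in V$, $\Gamma\subset\operatorname{Aut}(G)$ a group acting transitively on $V$, and $\mathbb{P}$ a $\Gamma$-invariant and ergodic probability measure on $\mathbb{R}^V$ with $\mathbb{E}|s(o)|<\infty$. If $\mathbb{E}\,s(o)<1$, then $\mathbb{P}\{s\text{ stabilizes}\}=1$.
   Context: $\Delta u(x)=\sum_{y\sim x}(u(y)-u(x))$. $s:V\to\mathbb{R}$ stabilizes if there exists $f:V\to[0,\infty)$ with $s+\Delta f\le1$ pointwise. $\Gamma$-invariance means $T_\alpha s$ has law $\mathbb{P}$ whenever $s$ does, where $(T_\alpha f)(x)=f(\alpha^{-1}x)$, $\alpha\in\Gamma$; ergodicity is with respect to this $\Gamma$-action. *)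

theory Defs
  imports "HOL-Probability.Probability"
begin

text \<open>Graphs: vertex set is the universe of type 'v, adjacency a symmetric, irreflexive relation.\<close>

definition simple_graph :: "('v \<Rightarrow> 'v \<Rightarrow> bool) \<Rightarrow> bool" where
  "simple_graph E \<longleftrightarrow> (\<forall>x y. E x y \<longleftrightarrow> E y x) \<and> (\<forall>x. \<not> E x x)"

definition locally_finite :: "('v \<Rightarrow> 'v \<Rightarrow> bool) \<Rightarrow> bool" where
  "locally_finite E \<longleftrightarrow> (\<forall>x. finite {y. E x y})"

definition graph_connected :: "('v \<Rightarrow> 'v \<Rightarrow> bool) \<Rightarrow> bool" where
  "graph_connected E \<longleftrightarrow> (\<forall>x y. (x, y) \<in> {(a, b). E a b}\<^sup>*)"

definition graph_aut :: "('v \<Rightarrow> 'v \<Rightarrow> bool) \<Rightarrow> ('v \<Rightarrow> 'v) \<Rightarrow> bool" where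
  "graph_aut E \<alpha> \<longleftrightarrow> bij \<alpha> \<and> (\<forall>x y. E x y \<longleftrightarrow> E (\<alpha> x) (\<alpha> y))"

definition vertex_transitive :: "('v \<Rightarrow> 'v \<Rightarrow> bool) \<Rightarrow> bool" where
  "vertex_transitive E \<longleftrightarrow> (\<forall>x y. \<exists>\<alpha>. graph_aut E \<alpha> \<and> \<alpha> x = y)"

definition transitive_aut_group :: "('v \<Rightarrow> 'v \<Rightarrow> bool) \<Rightarrow> ('v \<Rightarrow> 'v) set \<Rightarrow> bool" where
  "transitive_aut_group E \<Gamma> \<longleftrightarrow>
     (\<forall>\<alpha>\<in>\<Gamma>. graph_aut E \<alpha>) \<and> id \<in> \<Gamma> \<and>
     (\<forall>\<alpha>\<in>\<Gamma>. \<forall>\<beta>\<in>\<Gamma>. \<alpha> \<circ> \<beta> \<in> \<Gamma>) \<and> (\<forall>\<alpha>\<in>\<Gamma>. inv \<alpha> \<in> \<Gamma>) \<and>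
     (\<forall>x y. \<exists>\<alpha>\<in>\<Gamma>. \<alpha> x = y)"

definition shift :: "('v \<Rightarrow> 'v) \<Rightarrow> ('v \<Rightarrow> real) \<Rightarrow> ('v \<Rightarrow> real)" where
  "shift \<alpha> f = (\<lambda>x. f (inv \<alpha> x))"

definition laplacian :: "('v \<Rightarrow> 'v \<Rightarrow> bool) \<Rightarrow> ('v \<Rightarrow> real) \<Rightarrow> 'v \<Rightarrow> real" where
  "laplacian E u x = (\<Sum>y\<in>{y. E x y}. u y - u x)"

definition stabilizes :: "('v \<Rightarrow> 'v \<Rightarrow> bool) \<Rightarrow> ('v \<Rightarrow> real) \<Rightarrow> bool" where
  "stabilizes E s \<longleftrightarrow> (\<exists>f :: 'v \<Rightarrow> real. (\<forall>x. f x \<ge> 0) \<and> (\<forall>x. s x + laplacian E f x \<le> 1))"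

definition invariant_measure :: "('v \<Rightarrow> 'v) set \<Rightarrow> ('v \<Rightarrow> real) measure \<Rightarrow> bool" where
  "invariant_measure \<Gamma> P \<longleftrightarrow> (\<forall>\<alpha>\<in>\<Gamma>. distr P P (shift \<alpha>) = P)"

definition ergodic_measure :: "('v \<Rightarrow> 'v) set \<Rightarrow> ('v \<Rightarrow> real) measure \<Rightarrow> bool" where
  "ergodic_measure \<Gamma> P \<longleftrightarrow>
     (\<forall>A\<in>sets P. (\<forall>\<alpha>\<in>\<Gamma>. shift \<alpha> -` A \<inter> space P = A) \<longrightarrow>
        emeasure P A = 0 \<or> emeasure P A = 1)"

end

theory Submission
  imports Defs
begin

text \<open>Run the divisible sandpile: in parallel rounds every vertex with mass above 1 distributes
  the excess equally to its neighbours.  The accumulated emissions (the odometer) satisfy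
  \<open>s + \<Delta> odometer = configuration \<le> 1 + excess\<close>, so if the excess at every vertex is summable
  over time, the limiting odometer stabilizes \<open>s\<close>; on a connected regular graph summability at
  one vertex propagates to all.  Summability at \<open>o\<close> is a \<open>\<Gamma>\<close>-invariant event, hence has
  probability 0 or 1 by ergodicity.  If it had probability 0, almost surely \<open>o\<close> would eventually
  carry mass \<open>\<ge> 1\<close> forever, and dominated convergence would give \<open>\<bbbE> min(mass at o, 1) \<rightarrow> 1\<close>;
  but by invariance toppling conserves \<open>\<bbbE>(mass at o) = \<bbbE> s(o) < 1\<close>.\<close>

definition excess :: "real \<Rightarrow> real" where
  "excess r = max (r - 1) 0"

lemma excess_nonneg: "0 \<le> excess r"
  by (simp add: excess_def)

lemma le_excess_plus_one: "r \<le> 1 + excess r"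
  by (simp add: excess_def)

lemma diff_excess_eq_min: "r - excess r = min r 1"
  by (simp add: excess_def)

lemma borel_measurable_excess[measurable]:
  assumes [measurable]: "f \<in> borel_measurable M"
  shows "(\<lambda>x. excess (f x)) \<in> borel_measurable M"
  unfolding excess_def by measurable

lemma integrable_excess:
  assumes "integrable M f"
  shows "integrable M (\<lambda>x. excess (f x))"
  using borel_measurable_integrable[OF assms]
  by (intro Bochner_Integration.integrable_bound[OF assms]) (auto simp: excess_def)

fun topple :: "('v \<Rightarrow> 'v \<Rightarrow> bool) \<Rightarrow> nat \<Rightarrow> nat \<Rightarrow> ('v \<Rightarrow> real) \<Rightarrow> 'v \<Rightarrow> real" where
  "topple E d 0 s = s"
| "topple E d (Suc k) s = (\<lambda>x. topple E d k s x - excess (topple E d k s x)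
      + (\<Sum>y\<in>{y. E x y}. excess (topple E d k s y)) / d)"

definition odometer :: "('v \<Rightarrow> 'v \<Rightarrow> bool) \<Rightarrow> nat \<Rightarrow> nat \<Rightarrow> ('v \<Rightarrow> real) \<Rightarrow> 'v \<Rightarrow> real" where
  "odometer E d n s x = (\<Sum>k<n. excess (topple E d k s x)) / d"

lemma odometer_nonneg: "0 \<le> odometer E d n s x"
  by (simp add: odometer_def sum_nonneg excess_nonneg)

lemma topple_ge_min: "min (s x) 1 \<le> topple E d k s x"
proof (induction k arbitrary: x)
  case (Suc k)
  have "min (s x) 1 \<le> topple E d k s x - excess (topple E d k s x)"
    using Suc[of x] diff_excess_eq_min[of "topple E d k s x"] by simp
  moreover have "0 \<le> (\<Sum>y\<in>{y. E x y}. excess (topple E d k s y)) / d"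
    by (simp add: sum_nonneg excess_nonneg)
  ultimately show ?case by simp
qed simp

lemma topple_ge_one_mono:
  assumes "1 \<le> topple E d j s x" and "j \<le> k"
  shows "1 \<le> topple E d k s x"
  using assms(2)
proof (induction k rule: dec_induct)
  case (step k)
  have "0 \<le> (\<Sum>y\<in>{y. E x y}. excess (topple E d k s y)) / d"
    by (simp add: sum_nonneg excess_nonneg)
  then show ?case using step.IH diff_excess_eq_min[of "topple E d k s x"] by simp
qed (rule assms(1))

lemma eventually_topple_ge_one:
  assumes "\<not> summable (\<lambda>k. excess (topple E d k s x))"
  shows "eventually (\<lambda>n. 1 \<le> topple E d n s x) sequentially"
proof -
  obtain j where "excess (topple E d j s x) \<noteq> 0"
    using assms by fastforce
  then have "1 \<le> topple E d j s x"
    by (simp add: excess_def)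
  then show ?thesis
    unfolding eventually_sequentially by (blast intro: topple_ge_one_mono)
qed

lemma graph_aut_image_neighbours:
  assumes "graph_aut E \<alpha>"
  shows "\<alpha> ` {y. E x y} = {y. E (\<alpha> x) y}"
  using assms unfolding graph_aut_def
  by (auto simp: image_iff) (metis bij_inv_eq_iff)

lemma graph_aut_inv:
  assumes "graph_aut E \<alpha>"
  shows "graph_aut E (inv \<alpha>)"
  using assms unfolding graph_aut_def
  by (metis bij_imp_bij_inv bij_inv_eq_iff)

lemma card_neighbours_graph_aut:
  assumes "graph_aut E \<alpha>"
  shows "card {y. E (\<alpha> x) y} = card {y. E x y}"
  using assms graph_aut_image_neighbours[OF assms]
  by (metis bij_is_inj card_image graph_aut_def inj_on_subset subset_UNIV)

lemma topple_shift:
  assumes "graph_aut E \<alpha>"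
  shows "topple E d k (shift \<alpha> s) x = topple E d k s (inv \<alpha> x)"
proof (induction k arbitrary: x)
  case (Suc k)
  have "inj (inv \<alpha>)"
    using graph_aut_inv[OF assms] bij_is_inj graph_aut_def by blast
  then have "(\<Sum>y\<in>{y. E (inv \<alpha> x) y}. excess (topple E d k s y))
      = (\<Sum>y\<in>{y. E x y}. excess (topple E d k s (inv \<alpha> y)))"
    by (simp add: graph_aut_image_neighbours[OF graph_aut_inv[OF assms], symmetric]
        sum.reindex inj_on_subset)
  then show ?case using Suc by simp
qed (simp add: shift_def)

lemma neighbours_nonempty:
  fixes E :: "'v \<Rightarrow> 'v \<Rightarrow> bool" and x :: 'v
  assumes "graph_connected E" and "infinite (UNIV :: 'v set)"
  shows "{y. E x y} \<noteq> {}"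
proof -
  obtain z :: 'v where "z \<noteq> x"
    using assms(2) by (metis finite.simps UNIV_eq_I insertCI)
  moreover have "(x, z) \<in> {(a, b). E a b}\<^sup>*"
    using assms(1) unfolding graph_connected_def by blast
  ultimately show ?thesis
    by (auto elim: converse_rtranclE)
qed

locale regular_graph =
  fixes E :: "'v \<Rightarrow> 'v \<Rightarrow> bool" and d :: nat
  assumes card_neighbours: "card {y. E x y} = d"
    and degree_pos: "0 < d"
begin

lemma finite_neighbours: "finite {y. E x y}"
  using card_neighbours degree_pos card.infinite by force

lemma laplacian_eq: "laplacian E u x = (\<Sum>y\<in>{y. E x y}. u y) - real d * u x"
  by (simp add: laplacian_def sum_subtractf card_neighbours)

text \<open>The odometer records, per edge, the mass emitted so far, so the mass balance of the
  toppling is a discrete Poisson equation.\<close>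

lemma topple_eq_laplacian_odometer:
  "topple E d n s x = s x + laplacian E (odometer E d n s) x"
proof (induction n arbitrary: x)
  case 0
  then show ?case by (simp add: odometer_def laplacian_def)
next
  case (Suc n)
  have "laplacian E (odometer E d (Suc n) s) x
      = laplacian E (odometer E d n s) x
        + ((\<Sum>y\<in>{y. E x y}. excess (topple E d n s y)) / d - excess (topple E d n s x))"
    using degree_pos
    by (simp add: laplacian_eq odometer_def sum.distrib sum_divide_distrib[symmetric] algebra_simps)
       (simp add: field_simps)
  then show ?case using Suc by simp
qed

lemma summable_excess_neighbour:
  assumes "E x y" and summable: "summable (\<lambda>k. excess (topple E d k s x))"
  shows "summable (\<lambda>k. excess (topple E d k s y))"
proof -
  define B where "B = (\<Sum>k. excess (topple E d k s x))"
  have partial_le: "(\<Sum>k\<in>K. excess (topple E d k s x)) \<le> B" if "finite K" for K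
    unfolding B_def using sum_le_suminf[OF summable that] excess_nonneg by blast
  have "(\<Sum>k<n. excess (topple E d k s y)) \<le> d * (1 + B - s x + B)" for n
  proof -
    have "(\<Sum>k<n. excess (topple E d k s y)) = d * odometer E d n s y"
      using degree_pos by (simp add: odometer_def)
    also have "\<dots> \<le> d * (\<Sum>z\<in>{z. E x z}. odometer E d n s z)"
      using assms(1) finite_neighbours
      by (intro mult_left_mono member_le_sum) (auto simp: odometer_nonneg)
    also have "\<dots> = d * (topple E d n s x - s x + d * odometer E d n s x)"
      using topple_eq_laplacian_odometer[of n s x] by (simp add: laplacian_eq)
    also have "\<dots> \<le> d * (1 + B - s x + B)"
    proof -
      have "topple E d n s x \<le> 1 + B"
        using le_excess_plus_one[of "topple E d n s x"] partial_le[of "{n}"] by simp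
      moreover have "d * odometer E d n s x \<le> B"
        using partial_le[of "{..<n}"] degree_pos by (simp add: odometer_def)
      ultimately show ?thesis by (intro mult_left_mono) auto
    qed
    finally show ?thesis .
  qed
  then show ?thesis
    by (intro summableI_nonneg_bounded) (auto simp: excess_nonneg)
qed

lemma summable_excess_connected:
  assumes "graph_connected E" and "summable (\<lambda>k. excess (topple E d k s x))"
  shows "summable (\<lambda>k. excess (topple E d k s y))"
proof -
  have "(x, y) \<in> {(a, b). E a b}\<^sup>*"
    using assms(1) unfolding graph_connected_def by blast
  then show ?thesis
    by induction (auto intro: assms(2) summable_excess_neighbour)
qed

lemma stabilizes_if_summable_excess:
  assumes summable: "\<And>x. summable (\<lambda>k. excess (topple E d k s x))"
  shows "stabilizes E s"
proof -
  define f where "f x = (\<Sum>k. excess (topple E d k s x)) / d" for x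
  have lim: "(\<lambda>n. odometer E d n s x) \<longlonglongrightarrow> f x" for x
    unfolding odometer_def f_def by (intro tendsto_divide summable_LIMSEQ summable tendsto_const) (simp add: degree_pos)
  have "s x + laplacian E f x \<le> 1" for x
  proof (rule tendsto_le)
    show "(\<lambda>n. s x + laplacian E (odometer E d n s) x) \<longlonglongrightarrow> s x + laplacian E f x"
      unfolding laplacian_def by (intro tendsto_intros lim)
    show "(\<lambda>n. 1 + excess (topple E d n s x)) \<longlonglongrightarrow> 1"
      using tendsto_add[OF tendsto_const summable_LIMSEQ_zero[OF summable]] by simp
    show "\<forall>\<^sub>F n in sequentially. s x + laplacian E (odometer E d n s) x \<le> 1 + excess (topple E d n s x)"
      by (simp add: le_excess_plus_one flip: topple_eq_laplacian_odometer)
  qed simp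
  moreover have "0 \<le> f x" for x
    unfolding f_def by (simp add: suminf_nonneg[OF summable] excess_nonneg)
  ultimately show ?thesis
    unfolding stabilizes_def by blast
qed

end

locale invariant_sandpile = prob_space P for P :: "('v \<Rightarrow> real) measure" +
  fixes E :: "'v \<Rightarrow> 'v \<Rightarrow> bool" and v0 :: 'v and \<Gamma> :: "('v \<Rightarrow> 'v) set"
  assumes infinite_vertices: "infinite (UNIV :: 'v set)"
    and connected: "graph_connected E"
    and locally_finite: "locally_finite E"
    and aut_group: "transitive_aut_group E \<Gamma>"
    and sets_P: "sets P = sets (PiM UNIV (\<lambda>_. borel))"
    and invariant: "invariant_measure \<Gamma> P"
    and integrable_v0: "integrable P (\<lambda>s. s v0)"
begin

lemma graph_aut_\<Gamma>: "\<alpha> \<in> \<Gamma> \<Longrightarrow> graph_aut E \<alpha>"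
  using aut_group unfolding transitive_aut_group_def by simp

lemma \<Gamma>_transitive: "\<exists>\<alpha>\<in>\<Gamma>. \<alpha> x = y"
  using aut_group unfolding transitive_aut_group_def by blast

lemma obtain_\<Gamma>_inv_to:
  obtains \<alpha> where "\<alpha> \<in> \<Gamma>" and "inv \<alpha> v0 = x"
proof -
  obtain \<alpha> where "\<alpha> \<in> \<Gamma>" and "\<alpha> x = v0"
    using \<Gamma>_transitive by blast
  moreover from this have "inv \<alpha> v0 = x"
    using graph_aut_\<Gamma> by (metis bij_is_inj graph_aut_def inv_f_f)
  ultimately show thesis
    using that by blast
qed

definition deg :: nat where
  "deg = card {y. E v0 y}"

sublocale regular_graph E deg
proof
  show "card {y. E x y} = deg" for x
  proof -
    obtain \<alpha> where "\<alpha> \<in> \<Gamma>" and "\<alpha> x = v0"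
      using \<Gamma>_transitive by blast
    then show ?thesis
      using card_neighbours_graph_aut[OF graph_aut_\<Gamma>] by (metis deg_def)
  qed
  show "0 < deg"
    using locally_finite neighbours_nonempty[OF connected infinite_vertices]
    unfolding deg_def locally_finite_def by (simp add: card_gt_0_iff)
qed

lemma space_eq_UNIV: "space P = UNIV"
  using sets_eq_imp_space_eq[OF sets_P] by (simp add: space_PiM)

lemma measurable_component[measurable]: "(\<lambda>s. s x) \<in> borel_measurable P"
  by (simp add: measurable_cong_sets[OF sets_P refl])

lemma measurable_topple[measurable]: "(\<lambda>s. topple E deg k s x) \<in> borel_measurable P"
proof (induction k arbitrary: x)
  case (Suc k)
  note [measurable] = Suc
  show ?case by simp measurable
qed simp

lemma measurable_shift[measurable]: "shift \<alpha> \<in> measurable P P"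
  unfolding shift_def[abs_def] measurable_cong_sets[OF refl sets_P]
  by (rule measurable_PiM_single') simp_all

lemma
  fixes g :: "('v \<Rightarrow> real) \<Rightarrow> real"
  assumes "\<alpha> \<in> \<Gamma>" and [measurable]: "g \<in> borel_measurable P"
  shows integrable_shift_iff: "integrable P (\<lambda>s. g (shift \<alpha> s)) \<longleftrightarrow> integrable P g"
    and integral_shift: "(\<integral>s. g (shift \<alpha> s) \<partial>P) = integral\<^sup>L P g"
  using invariant assms(1) integrable_distr_eq[of "shift \<alpha>" P P g] integral_distr[of "shift \<alpha>" P P g]
  unfolding invariant_measure_def by simp_all

lemma integrable_component: "integrable P (\<lambda>s. s x)"
proof -
  obtain \<alpha> where "\<alpha> \<in> \<Gamma>" and "inv \<alpha> v0 = x"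
    by (rule obtain_\<Gamma>_inv_to)
  then show ?thesis
    using integrable_shift_iff[of \<alpha> "\<lambda>s. s v0"] integrable_v0 by (simp add: shift_def)
qed

lemma integrable_topple: "integrable P (\<lambda>s. topple E deg k s x)"
proof (induction k arbitrary: x)
  case (Suc k)
  show ?case
    unfolding topple.simps
    by (intro Bochner_Integration.integrable_add Bochner_Integration.integrable_diff
        Bochner_Integration.integrable_divide_zero Bochner_Integration.integrable_sum
        integrable_excess Suc)
qed (simp add: integrable_component)

lemma integral_excess_topple_vertex_independent:
  "(\<integral>s. excess (topple E deg k s x) \<partial>P) = (\<integral>s. excess (topple E deg k s v0) \<partial>P)"
proof -
  obtain \<alpha> where "\<alpha> \<in> \<Gamma>" and "inv \<alpha> v0 = x"
    by (rule obtain_\<Gamma>_inv_to)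
  then show ?thesis
    using integral_shift[of \<alpha> "\<lambda>s. excess (topple E deg k s v0)"]
    by (simp add: topple_shift graph_aut_\<Gamma>)
qed

text \<open>Toppling conserves mass in expectation: what vertex \<open>v0\<close> loses equals, by invariance,
  what it receives from its \<open>deg\<close> neighbours.\<close>

lemma integral_topple: "(\<integral>s. topple E deg k s v0 \<partial>P) = (\<integral>s. s v0 \<partial>P)"
proof (induction k)
  case (Suc k)
  let ?e = "\<lambda>y s. excess (topple E deg k s y)"
  have integrable_e: "integrable P (?e y)" for y
    by (intro integrable_excess integrable_topple)
  have "(\<integral>s. topple E deg (Suc k) s v0 \<partial>P)
      = (\<integral>s. topple E deg k s v0 - ?e v0 s \<partial>P) + (\<integral>s. (\<Sum>y\<in>{y. E v0 y}. ?e y s) / deg \<partial>P)"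
    unfolding topple.simps
    by (intro Bochner_Integration.integral_add Bochner_Integration.integrable_diff
        Bochner_Integration.integrable_divide_zero Bochner_Integration.integrable_sum
        integrable_topple integrable_e)
  also have "(\<integral>s. topple E deg k s v0 - ?e v0 s \<partial>P)
      = (\<integral>s. topple E deg k s v0 \<partial>P) - (\<integral>s. ?e v0 s \<partial>P)"
    by (intro Bochner_Integration.integral_diff integrable_topple integrable_e)
  also have "(\<integral>s. (\<Sum>y\<in>{y. E v0 y}. ?e y s) / deg \<partial>P) = (\<Sum>y\<in>{y. E v0 y}. \<integral>s. ?e y s \<partial>P) / deg"
    by (simp only: Bochner_Integration.integral_divide_zero Bochner_Integration.integral_sum integrable_e)
  also have "(\<Sum>y\<in>{y. E v0 y}. \<integral>s. ?e y s \<partial>P) = deg * (\<integral>s. ?e v0 s \<partial>P)"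
    by (subst sum.cong[OF refl integral_excess_topple_vertex_independent])
       (simp_all add: card_neighbours)
  finally show ?case
    using Suc degree_pos by simp
qed simp

definition summable_excess_set :: "('v \<Rightarrow> real) set" where
  "summable_excess_set = {s. summable (\<lambda>k. excess (topple E deg k s v0))}"

lemma summable_excess_set_in_sets: "summable_excess_set \<in> sets P"
proof -
  have "summable (\<lambda>k. excess (topple E deg k s v0))
      \<longleftrightarrow> (\<Sum>k. ennreal (excess (topple E deg k s v0))) \<noteq> \<top>" for s
    using summable_suminf_not_top ennreal_suminf_neq_top excess_nonneg by metis
  then have "summable_excess_set = {s \<in> space P. (\<Sum>k. ennreal (excess (topple E deg k s v0))) \<noteq> \<top>}"
    by (auto simp: summable_excess_set_def space_eq_UNIV)
  also have "\<dots> \<in> sets P"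
    by measurable
  finally show ?thesis .
qed

lemma shift_vimage_summable_excess_set:
  "\<alpha> \<in> \<Gamma> \<Longrightarrow> shift \<alpha> -` summable_excess_set \<inter> space P = summable_excess_set"
  unfolding summable_excess_set_def space_eq_UNIV
  using summable_excess_connected[OF connected] by (auto simp: topple_shift graph_aut_\<Gamma>)

lemma not_AE_eventually_saturated:
  assumes "(\<integral>s. s v0 \<partial>P) < 1"
  shows "\<not> (AE s in P. eventually (\<lambda>n. 1 \<le> topple E deg n s v0) sequentially)"
proof
  assume saturated: "AE s in P. eventually (\<lambda>n. 1 \<le> topple E deg n s v0) sequentially"
  define h where "h n s = min (topple E deg n s v0) 1" for n s
  have h_measurable: "h n \<in> borel_measurable P" for n
    unfolding h_def by measurable
  have dominating: "integrable P (\<lambda>s. \<bar>s v0\<bar> + 1)"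
    by (intro Bochner_Integration.integrable_add integrable_abs integrable_v0) simp
  have h_lim: "AE s in P. (\<lambda>n. h n s) \<longlonglongrightarrow> 1"
    using saturated
  proof eventually_elim
    case (elim s)
    then have "eventually (\<lambda>n. h n s = 1) sequentially"
      by (rule eventually_mono) (simp add: h_def)
    then show ?case
      by (rule tendsto_eventually)
  qed
  have h_bound: "AE s in P. norm (h n s) \<le> \<bar>s v0\<bar> + 1" for n
  proof (intro AE_I2)
    fix s
    show "norm (h n s) \<le> \<bar>s v0\<bar> + 1"
      using topple_ge_min[of s v0 E deg n] by (auto simp: h_def)
  qed
  have "(\<lambda>n. integral\<^sup>L P (h n)) \<longlonglongrightarrow> (\<integral>s. 1 \<partial>P)"
    by (rule integral_dominated_convergence[OF _ h_measurable dominating h_lim h_bound]) simp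
  moreover have "integral\<^sup>L P (h n) \<le> (\<integral>s. s v0 \<partial>P)" for n
  proof -
    have "integrable P (h n)"
      by (rule integrable_dominated_convergence2[OF _ h_measurable dominating h_lim h_bound]) simp
    then have "integral\<^sup>L P (h n) \<le> (\<integral>s. topple E deg n s v0 \<partial>P)"
      by (rule integral_mono[OF _ integrable_topple]) (simp add: h_def)
    then show ?thesis
      by (simp add: integral_topple)
  qed
  ultimately have "1 \<le> (\<integral>s. s v0 \<partial>P)"
    using LIMSEQ_le_const2 prob_space by fastforce
  with assms show False
    by simp
qed

lemma AE_summable_excess:
  assumes "ergodic_measure \<Gamma> P" and "(\<integral>s. s v0 \<partial>P) < 1"
  shows "AE s in P. summable (\<lambda>k. excess (topple E deg k s v0))"
proof -
  have "emeasure P summable_excess_set \<noteq> 0"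
  proof
    assume "emeasure P summable_excess_set = 0"
    then have "AE s in P. s \<notin> summable_excess_set"
      using summable_excess_set_in_sets by (intro AE_I'[of summable_excess_set]) auto
    then have "AE s in P. eventually (\<lambda>n. 1 \<le> topple E deg n s v0) sequentially"
      by eventually_elim (simp add: summable_excess_set_def eventually_topple_ge_one)
    with not_AE_eventually_saturated[OF assms(2)] show False ..
  qed
  then have "emeasure P summable_excess_set = 1"
    using assms(1) summable_excess_set_in_sets shift_vimage_summable_excess_set
    unfolding ergodic_measure_def by blast
  then show ?thesis
    using AE_in_set_eq_1[OF summable_excess_set_in_sets] emeasure_eq_measure
    by (simp add: summable_excess_set_def)
qed

lemma AE_stabilizes:
  assumes "ergodic_measure \<Gamma> P" and "(\<integral>s. s v0 \<partial>P) < 1"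
  shows "AE s in P. stabilizes E s"
  using AE_summable_excess[OF assms]
  by eventually_elim (blast intro: stabilizes_if_summable_excess summable_excess_connected[OF connected])

end

theorem lemma4p2:
  fixes E :: "'v \<Rightarrow> 'v \<Rightarrow> bool" and v0 :: 'v
    and \<Gamma> :: "('v \<Rightarrow> 'v) set" and P :: "('v \<Rightarrow> real) measure"
  assumes "simple_graph E" and "infinite (UNIV :: 'v set)"
    and "graph_connected E" and "locally_finite E" and "vertex_transitive E"
    and "transitive_aut_group E \<Gamma>"
    and "prob_space P" and "sets P = sets (PiM UNIV (\<lambda>_. borel))"
    and "invariant_measure \<Gamma> P" and "ergodic_measure \<Gamma> P"
    and "integrable P (\<lambda>s. s v0)"
    and "(\<integral>s. s v0 \<partial>P) < 1"
  shows "AE s in P. stabilizes E s"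
proof -
  interpret invariant_sandpile P E v0 \<Gamma>
    using assms by (simp add: invariant_sandpile_def invariant_sandpile_axioms_def)
  show ?thesis
    using assms(10,12) by (rule AE_stabilizes)
qed

end
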